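(* For every $\mathbf z\in[0,1]^{N_e}$ one has $J(\mathbb H(\mathbf z))\le J(\mathbf z)$, where $J$ is the objective function defined in the context.
   Context: Fix integers $N_x,N_y,N_e\ge1$, event data $\mathbf x\in\{1,\dots,N_x\}^{N_e}$, $\mathbf y\in\{1,\dots,N_y\}^{N_e}$, $\mathbf t\in\mathbb R^{N_e}$ (event $k$ occurs at pixel $(x_k,y_k)$ at time $t_k$), a reference time $t_0\in\mathbb R$ and parameters $\lambda_1,\lambda_2\ge 0$. Let $\Omega=\{1,\dots,N_x\}\times\{1,\dots,N_y\}$ and $\mathbf b=(1,\dots,1)^\top\in\mathbb R^{N_e}$. The Heaviside function is $\mathbb H(s)=1$ if $s>0$, $\mathbb H(s)=0$ if $s\le0$, applied componentwise; $\odot$ is the Hadamard product. Convention: any quotient whose denominator vanishes is set to $0$, and $0\log 0=0$. For $\mathbf z\in\mathbb R^{N_e}$ let $\mathbf h=\mathbb H(\mathbf z)$, $n(\mathbf z)=\sum_k h_k$, $\mu_t(\mathbf z)=\mathbf h^\top\mathbf t/n(\mathbf z)$, $\mu_x(\mathbf z)=\mathbf h^\top\mathbf x/n(\mathbf z)$, $\mu_y(\mathbf z)=\mathbf h^\top\mathbf y/n(\mathbf z)$, $\theta_x(\mathbf z)=\dfrac{\mathbf h^\top\big((\mathbf t-\mu_t(\mathbf z)\mathbf b)\odot(\mathbf x-\mu_x(\mathbf z)\mathbf b)\big)}{\mathbf h^\top\big((\mathbf t-\mu_t(\mathbf z)\mathbf b)\odot(\mathbf t-\mu_t(\mathbf z)\mathbf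 b)\big)}$, and $\theta_y(\mathbf z)$ the same with $\mathbf y,\mu_y$ in place of $\mathbf x,\mu_x$. Warped event positions: $w_k(\mathbf z)=\big(x_k+(t_0-t_k)\theta_x(\mathbf z),\;y_k+(t_0-t_k)\theta_y(\mathbf z)\big)\in\mathbb R^2$. Let $\delta(0)=1$ and $\delta(\gamma)=0$ for $\gamma\neq0$. Image of warped events at pixel $(\hat x,\hat y)\in\Omega$: $I_{(\hat x,\hat y)}(\mathbf z)=\sum_{k=1}^{N_e} z_k\,\delta\big(\|w_k(\mathbf z)-(\hat x,\hat y)\|_2\big)$. Entropy: $E(\mathbf z)=\sum_{(\hat x,\hat y)\in\Omega} I_{(\hat x,\hat y)}(\mathbf z)\log I_{(\hat x,\hat y)}(\mathbf z)$. Variance terms: $V(\mathbf z,\mathbf x)=\frac1{N_x}\|\mathbf h\odot\mathbf x-\mu_x(\mathbf z)\mathbf b\|_2^2$, $V(\mathbf z,\mathbf y)=\frac1{N_x}\|\mathbf h\odot\mathbf y-\mu_y(\mathbf z)\mathbf b\|_2^2$. Objective: $J(\mathbf z)=-E(\mathbf z)+\frac{\lambda_1}{2}\big(V(\mathbf z,\mathbf x)+V(\mathbf z,\mathbf y)\big)+\frac{\lambda_2}{2}\|\mathbb H(\mathbf z)\|_2^2$. *)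

theory Defs
  imports "HOL-Analysis.Analysis"
begin

text \<open>Events are indexed by k in {..<Ne} (0-based, standing for 1..N_e).
  Data: x, y :: nat => nat (pixel coordinates), t :: nat => real (times).
  Vectors z :: nat => real; only entries k < Ne matter.\<close>

definition Hv :: "(nat \<Rightarrow> real) \<Rightarrow> nat \<Rightarrow> real" where
  "Hv z = (\<lambda>k. if z k > 0 then 1 else 0)"

definition ncount :: "nat \<Rightarrow> (nat \<Rightarrow> real) \<Rightarrow> real" where
  "ncount Ne z = (\<Sum>k<Ne. Hv z k)"

text \<open>Mean of the data vector v over the active events (division by 0 gives 0).\<close>
definition muv :: "nat \<Rightarrow> (nat \<Rightarrow> real) \<Rightarrow> (nat \<Rightarrow> real) \<Rightarrow> real" where
  "muv Ne v z = (\<Sum>k<Ne. Hv z k * v k) / ncount Ne z"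

definition thetav :: "nat \<Rightarrow> (nat \<Rightarrow> real) \<Rightarrow> (nat \<Rightarrow> real) \<Rightarrow> (nat \<Rightarrow> real) \<Rightarrow> real" where
  "thetav Ne t v z =
     (\<Sum>k<Ne. Hv z k * ((t k - muv Ne t z) * (v k - muv Ne v z))) /
     (\<Sum>k<Ne. Hv z k * ((t k - muv Ne t z) * (t k - muv Ne t z)))"

definition warp :: "nat \<Rightarrow> (nat \<Rightarrow> nat) \<Rightarrow> (nat \<Rightarrow> nat) \<Rightarrow> (nat \<Rightarrow> real) \<Rightarrow> real
    \<Rightarrow> (nat \<Rightarrow> real) \<Rightarrow> nat \<Rightarrow> real \<times> real" where
  "warp Ne x y t t0 z k =
     (real (x k) + (t0 - t k) * thetav Ne t (\<lambda>j. real (x j)) z,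
      real (y k) + (t0 - t k) * thetav Ne t (\<lambda>j. real (y j)) z)"

definition kdelta :: "real \<Rightarrow> real" where
  "kdelta g = (if g = 0 then 1 else 0)"

definition Img :: "nat \<Rightarrow> (nat \<Rightarrow> nat) \<Rightarrow> (nat \<Rightarrow> nat) \<Rightarrow> (nat \<Rightarrow> real) \<Rightarrow> real
    \<Rightarrow> (nat \<Rightarrow> real) \<Rightarrow> nat \<Rightarrow> nat \<Rightarrow> real" where
  "Img Ne x y t t0 z xh yh =
     (\<Sum>k<Ne. z k * kdelta (dist (warp Ne x y t t0 z k) (real xh, real yh)))"

definition slogs :: "real \<Rightarrow> real" where
  "slogs s = (if s = 0 then 0 else s * ln s)"

definition Entropy :: "nat \<Rightarrow> nat \<Rightarrow> nat \<Rightarrow> (nat \<Rightarrow> nat) \<Rightarrow> (nat \<Rightarrow> nat) \<Rightarrow> (nat \<Rightarrow> real)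
    \<Rightarrow> real \<Rightarrow> (nat \<Rightarrow> real) \<Rightarrow> real" where
  "Entropy Nx Ny Ne x y t t0 z =
     (\<Sum>(xh, yh) \<in> {1..Nx} \<times> {1..Ny}. slogs (Img Ne x y t t0 z xh yh))"

text \<open>V(z,v) = (1/N_x) * || h .* v - mu_v(z) b ||^2 (the paper uses 1/N_x for both terms).\<close>
definition Var :: "nat \<Rightarrow> nat \<Rightarrow> (nat \<Rightarrow> real) \<Rightarrow> (nat \<Rightarrow> real) \<Rightarrow> real" where
  "Var Nx Ne z v = (1 / real Nx) * (\<Sum>k<Ne. (Hv z k * v k - muv Ne v z)\<^sup>2)"

definition Jobj :: "nat \<Rightarrow> nat \<Rightarrow> nat \<Rightarrow> (nat \<Rightarrow> nat) \<Rightarrow> (nat \<Rightarrow> nat) \<Rightarrow> (nat \<Rightarrow> real)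
    \<Rightarrow> real \<Rightarrow> real \<Rightarrow> real \<Rightarrow> (nat \<Rightarrow> real) \<Rightarrow> real" where
  "Jobj Nx Ny Ne x y t t0 l1 l2 z =
     - Entropy Nx Ny Ne x y t t0 z
     + l1 / 2 * (Var Nx Ne z (\<lambda>k. real (x k)) + Var Nx Ne z (\<lambda>k. real (y k)))
     + l2 / 2 * (\<Sum>k<Ne. (Hv z k)\<^sup>2)"

end

theory Submission
  imports Defs
begin

text \<open>The warp and the variance terms see \<open>z\<close> only through \<open>H(z)\<close>, which is idempotent, so
  \<open>J(z) - J(H(z))\<close> is the entropy difference \<open>E(H(z)) - E(z)\<close>. For \<open>z\<close> with entries in \<open>[0,1]\<close> every pixel
  value of \<open>H(z)\<close> is a natural number dominating the corresponding value of \<open>z\<close>, and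
  \<open>s \<mapsto> s log s\<close> is monotone from any \<open>s \<ge> 0\<close> up to a natural number: it is \<open>\<le> 0\<close> on \<open>[0,1]\<close>,
  \<open>\<ge> 0\<close> on the positive integers, and increasing on \<open>[1,\<infinity>)\<close>.\<close>

lemma Hv_idem [simp]: "Hv (Hv z) = Hv z"
  by (rule ext) (simp add: Hv_def)

lemma warp_Hv [simp]: "warp Ne x y t t0 (Hv z) = warp Ne x y t t0 z"
  by (rule ext) (simp add: warp_def thetav_def muv_def ncount_def)

lemma Var_Hv [simp]: "Var Nx Ne (Hv z) v = Var Nx Ne z v"
  by (simp add: Var_def muv_def ncount_def)

lemma slogs_nonpos: "0 \<le> s \<Longrightarrow> s \<le> 1 \<Longrightarrow> slogs s \<le> 0"
  by (simp add: slogs_def mult_nonneg_nonpos)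

lemma slogs_le_of_nat:
  assumes "0 \<le> s" and "s \<le> real n"
  shows "slogs s \<le> slogs (real n)"
proof (cases "s \<le> 1")
  case True
  have "0 \<le> slogs (real n)"
    by (cases n) (simp_all add: slogs_def)
  with slogs_nonpos[OF assms(1) True] show ?thesis
    by linarith
next
  case False
  then have "s * ln s \<le> real n * ln (real n)"
    using assms by (intro mult_mono) auto
  with False assms show ?thesis
    by (simp add: slogs_def)
qed

lemma Img_Hv_eq_card:
  "Img Ne x y t t0 (Hv z) xh yh =
     real (card {k \<in> {..<Ne}. 0 < z k \<and> warp Ne x y t t0 z k = (real xh, real yh)})"
proof -
  have "Img Ne x y t t0 (Hv z) xh yh =
      (\<Sum>k<Ne. if 0 < z k \<and> warp Ne x y t t0 z k = (real xh, real yh) then 1 else 0)"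
    unfolding Img_def warp_Hv by (intro sum.cong) (auto simp: Hv_def kdelta_def)
  then show ?thesis
    by (simp add: sum.If_cases Int_def)
qed

lemma Img_le_Img_Hv:
  assumes "\<forall>k<Ne. z k \<in> {0..1}"
  shows "0 \<le> Img Ne x y t t0 z xh yh"
    and "Img Ne x y t t0 z xh yh \<le> Img Ne x y t t0 (Hv z) xh yh"
  using assms unfolding Img_def warp_Hv
  by (auto simp: Hv_def kdelta_def intro!: sum_nonneg sum_mono)

lemma Entropy_le_Entropy_Hv:
  assumes "\<forall>k<Ne. z k \<in> {0..1}"
  shows "Entropy Nx Ny Ne x y t t0 z \<le> Entropy Nx Ny Ne x y t t0 (Hv z)"
  unfolding Entropy_def
proof (intro sum_mono, clarify)
  fix xh yh
  show "slogs (Img Ne x y t t0 z xh yh) \<le> slogs (Img Ne x y t t0 (Hv z) xh yh)"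
    using Img_le_Img_Hv[OF assms] slogs_le_of_nat unfolding Img_Hv_eq_card by metis
qed

theorem mainTheorem3:
  fixes Nx Ny Ne :: nat and x y :: "nat \<Rightarrow> nat" and t :: "nat \<Rightarrow> real"
    and t0 l1 l2 :: real and z :: "nat \<Rightarrow> real"
  assumes "Nx \<ge> 1" and "Ny \<ge> 1" and "Ne \<ge> 1"
    and "\<forall>k<Ne. x k \<in> {1..Nx}" and "\<forall>k<Ne. y k \<in> {1..Ny}"
    and "l1 \<ge> 0" and "l2 \<ge> 0"
    and "\<forall>k<Ne. z k \<in> {0..1}"
  shows "Jobj Nx Ny Ne x y t t0 l1 l2 (Hv z) \<le> Jobj Nx Ny Ne x y t t0 l1 l2 z"
  using Entropy_le_Entropy_Hv[OF assms(8)] by (simp add: Jobj_def)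

end
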